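(* Let $\mathcal M=(\mathcal H_A,\xi,\mathcal E,\mathsf Z)$ be a measurement scheme constrained by the third law that implements an extremal instrument $\mathcal I$ on $\mathcal H_S$. Then for every outcome $x$ and every $B\in\mathcal L(\mathcal H_S)$, $$\mathcal E^*(B\otimes\mathsf Z_x)=\mathcal I_x^*(B)\otimes\mathbb 1_A.$$
   Context: All Hilbert spaces are finite-dimensional and complex. A state is a positive operator of unit trace; it is full-rank if it is positive definite. A channel is a completely positive trace-preserving linear map, with dual $\Phi^*$ defined by $\mathrm{tr}[A\Phi(B)]=\mathrm{tr}[\Phi^*(A)B]$. A channel is constrained by the third law if it maps every full-rank state on its input space to a full-rank state on its output space. Let $2\le\dim\mathcal H_S<\infty$. An instrument with finite outcome set $\mathcal X$ is a family $\{\mathcal I_x\}_{x\in\mathcal X}$ of completely positive maps on $\mathcal L(\mathcal H_S)$ whose sum is trace-preserving. A measurement scheme $(\mathcal H_A,\xi,\mathcal E,\mathsf Z)$ consists of: - a finite-dimensional $\mathcal H_A$; - a state $\xi$ on $\mathcal H_A$; - a channel $\mathcal E$ on $\mathcal L(\mathcal H_S\otimes\mathcal H_A)$; - positive operators $\{\mathsf Z_x\}_{x\in\mathcal X}$ on $\mathcal H_A$ summing to $\mathbb 1$. It implements $\mathcal I_x(\rho)=\mathrm{tr}_A[(\mathbb 1\otimes\mathsf Z_x)\mathcal E(\rho\otimes\xi)]$. It is constrained by the third law if $\xi$ is full-rank and $\mathcal E$ is constrained by the third law. An instrument $\mathcal I$ is extremal if the following holds: whenever $\mathcal I_x=\lambda\mathcal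 I^{(1)}_x+(1-\lambda)\mathcal I^{(2)}_x$ for all $x$, with $\lambda\in(0,1)$ and $\mathcal I^{(1)},\mathcal I^{(2)}$ instruments with the same outcome set, then $\mathcal I^{(1)}=\mathcal I^{(2)}=\mathcal I$. *)

theory Defs
  imports Complex_Main
begin

text \<open>Operators on a finite-dimensional Hilbert space with orthonormal basis indexed by
  a finite type (or a finite index set) are represented as matrices, i.e. functions
  from pairs of indices to complex numbers.\<close>

type_synonym 'i op = "'i \<Rightarrow> 'i \<Rightarrow> complex"

definition mmult :: "'i::finite op \<Rightarrow> 'i op \<Rightarrow> 'i op" (infixl "**\<^sub>m" 70) where
  "A **\<^sub>m B = (\<lambda>i j. \<Sum>k\<in>UNIV. A i k * B k j)"

definition idop :: "'i op" where
  "idop = (\<lambda>i j. if i = j then 1 else 0)"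

definition tr :: "'i::finite op \<Rightarrow> complex" where
  "tr A = (\<Sum>i\<in>UNIV. A i i)"

definition qform :: "'i set \<Rightarrow> 'i op \<Rightarrow> ('i \<Rightarrow> complex) \<Rightarrow> complex" where
  "qform I A v = (\<Sum>i\<in>I. \<Sum>j\<in>I. cnj (v i) * A i j * v j)"

definition psd_on :: "'i set \<Rightarrow> 'i op \<Rightarrow> bool" where
  "psd_on I A \<longleftrightarrow> (\<forall>v. Im (qform I A v) = 0 \<and> Re (qform I A v) \<ge> 0)"

definition positive_op :: "'i::finite op \<Rightarrow> bool" where
  "positive_op A \<longleftrightarrow> psd_on UNIV A"

definition positive_definite :: "'i::finite op \<Rightarrow> bool" where
  "positive_definite A \<longleftrightarrow> positive_op A \<and>
     (\<forall>v. v \<noteq> (\<lambda>_. 0) \<longrightarrow> Re (qform UNIV A v) > 0)"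

definition is_state :: "'i::finite op \<Rightarrow> bool" where
  "is_state \<rho> \<longleftrightarrow> positive_op \<rho> \<and> tr \<rho> = 1"

definition full_rank_state :: "'i::finite op \<Rightarrow> bool" where
  "full_rank_state \<rho> \<longleftrightarrow> is_state \<rho> \<and> positive_definite \<rho>"

definition clinear_map :: "('i op \<Rightarrow> 'j op) \<Rightarrow> bool" where
  "clinear_map \<Phi> \<longleftrightarrow>
     (\<forall>A B c. \<Phi> (\<lambda>i j. c * A i j + B i j) = (\<lambda>i j. c * \<Phi> A i j + \<Phi> B i j))"

text \<open>Amplification id_n \<otimes> \<Phi>: an operator on C^n \<otimes> H is a block matrix indexed by
  (nat \<times> 'i) with blocks indexed by k,l < n; \<Phi> is applied blockwise.\<close>
definition ampl :: "('i op \<Rightarrow> 'j op) \<Rightarrow> (nat \<times> 'i) op \<Rightarrow> (nat \<times> 'j) op" where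
  "ampl \<Phi> X = (\<lambda>(k, j) (l, j'). \<Phi> (\<lambda>i i'. X (k, i) (l, i')) j j')"

definition completely_positive :: "('i::finite op \<Rightarrow> 'j::finite op) \<Rightarrow> bool" where
  "completely_positive \<Phi> \<longleftrightarrow> clinear_map \<Phi> \<and>
     (\<forall>n X. psd_on ({..<n} \<times> UNIV) X \<longrightarrow> psd_on ({..<n} \<times> UNIV) (ampl \<Phi> X))"

definition trace_preserving :: "('i::finite op \<Rightarrow> 'j::finite op) \<Rightarrow> bool" where
  "trace_preserving \<Phi> \<longleftrightarrow> (\<forall>A. tr (\<Phi> A) = tr A)"

definition channel :: "('i::finite op \<Rightarrow> 'j::finite op) \<Rightarrow> bool" where
  "channel \<Phi> \<longleftrightarrow> completely_positive \<Phi> \<and> trace_preserving \<Phi>"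

definition dual_map :: "('i::finite op \<Rightarrow> 'j::finite op) \<Rightarrow> 'j op \<Rightarrow> 'i op" where
  "dual_map \<Phi> A = (THE D. \<forall>B. tr (A **\<^sub>m \<Phi> B) = tr (D **\<^sub>m B))"

definition third_law_channel :: "('i::finite op \<Rightarrow> 'j::finite op) \<Rightarrow> bool" where
  "third_law_channel \<Phi> \<longleftrightarrow> channel \<Phi> \<and>
     (\<forall>\<rho>. full_rank_state \<rho> \<longrightarrow> full_rank_state (\<Phi> \<rho>))"

definition tensor :: "'i op \<Rightarrow> 'a op \<Rightarrow> ('i \<times> 'a) op" (infixr "\<otimes>\<^sub>o" 75) where
  "A \<otimes>\<^sub>o B = (\<lambda>(i, a) (j, b). A i j * B a b)"

definition ptrace_A :: "('i \<times> 'a::finite) op \<Rightarrow> 'i op" where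
  "ptrace_A M = (\<lambda>i j. \<Sum>a\<in>UNIV. M (i, a) (j, a))"

definition instrument :: "('x::finite \<Rightarrow> 's::finite op \<Rightarrow> 's op) \<Rightarrow> bool" where
  "instrument \<I> \<longleftrightarrow> (\<forall>x. completely_positive (\<I> x)) \<and>
     trace_preserving (\<lambda>\<rho>. (\<lambda>i j. \<Sum>x\<in>UNIV. \<I> x \<rho> i j))"

definition extremal_instrument :: "('x::finite \<Rightarrow> 's::finite op \<Rightarrow> 's op) \<Rightarrow> bool" where
  "extremal_instrument \<I> \<longleftrightarrow> instrument \<I> \<and>
     (\<forall>\<I>1 \<I>2 (t::real). instrument \<I>1 \<and> instrument \<I>2 \<and> 0 < t \<and> t < 1 \<and>
        (\<forall>x \<rho>. \<I> x \<rho> = (\<lambda>i j. complex_of_real t * \<I>1 x \<rho> i j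
                              + complex_of_real (1 - t) * \<I>2 x \<rho> i j))
        \<longrightarrow> \<I>1 = \<I> \<and> \<I>2 = \<I>)"

text \<open>Measurement scheme (H_A, \<xi>, E, Z); H_A has basis indexed by the finite type 'a.\<close>
definition measurement_scheme ::
  "'a::finite op \<Rightarrow> (('s::finite \<times> 'a) op \<Rightarrow> ('s \<times> 'a) op) \<Rightarrow> ('x::finite \<Rightarrow> 'a op) \<Rightarrow> bool" where
  "measurement_scheme \<xi> E Z \<longleftrightarrow> is_state \<xi> \<and> channel E \<and> (\<forall>x. positive_op (Z x)) \<and>
     (\<lambda>i j. \<Sum>x\<in>UNIV. Z x i j) = idop"

definition implements ::
  "'a::finite op \<Rightarrow> (('s::finite \<times> 'a) op \<Rightarrow> ('s \<times> 'a) op) \<Rightarrow> ('x::finite \<Rightarrow> 'a op)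
     \<Rightarrow> ('x \<Rightarrow> 's op \<Rightarrow> 's op) \<Rightarrow> bool" where
  "implements \<xi> E Z \<I> \<longleftrightarrow>
     (\<forall>x \<rho>. \<I> x \<rho> = ptrace_A ((idop \<otimes>\<^sub>o Z x) **\<^sub>m E (\<rho> \<otimes>\<^sub>o \<xi>)))"

definition third_law_scheme ::
  "'a::finite op \<Rightarrow> (('s::finite \<times> 'a) op \<Rightarrow> ('s \<times> 'a) op) \<Rightarrow> ('x::finite \<Rightarrow> 'a op) \<Rightarrow> bool" where
  "third_law_scheme \<xi> E Z \<longleftrightarrow> full_rank_state \<xi> \<and> third_law_channel E"

end

theory Submission
  imports Defs "HOL-Analysis.Analysis"
begin

text \<open>Replacing the probe state \<open>\<xi>\<close> of the scheme by an arbitrary state \<open>\<sigma>\<close> still yields an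
  instrument, depending linearly on \<open>\<sigma>\<close>. Since \<open>\<xi>\<close> is full rank, \<open>\<xi> \<plusminus> e H\<close> is a state for
  every traceless Hermitian \<open>H\<close> and small \<open>e > 0\<close>, and the instrument implemented with \<open>\<xi>\<close> is the
  average of the two instruments obtained from \<open>\<xi> \<plusminus> e H\<close>. Extremality forces both to equal it, so
  traceless Hermitian perturbations of the probe have no effect and, by linearity, the instrument
  built from \<open>\<sigma>\<close> is \<open>tr \<sigma>\<close> times the one built from \<open>\<xi>\<close>. Evaluating
  \<open>E\<^sup>*(B \<otimes> Z\<^sub>x)\<close> on product matrix units \<open>|i\<rangle>\<langle>j| \<otimes> |a\<rangle>\<langle>b|\<close> then gives
  \<open>tr |a\<rangle>\<langle>b| \<cdot> \<I>\<^sub>x\<^sup>*(B)\<close>.\<close>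

section \<open>Matrix units, linear maps and dual maps\<close>

lemma sum_UNIV_prod:
  "(\<Sum>x\<in>(UNIV::('a::finite \<times> 'b::finite) set). f x) = (\<Sum>a\<in>UNIV. \<Sum>b\<in>UNIV. f (a, b))"
  by (simp add: sum.cartesian_product flip: UNIV_Times_UNIV)

lemma sum_if_zero: "(\<Sum>x\<in>A. if P then f x else 0) = (if P then sum f A else 0)"
  by simp

lemmas if_zero_distribs =
  if_distrib[of "\<lambda>c. _ * c"] if_distrib[of "\<lambda>c. c * _"] if_distrib[of cnj] sum_if_zero

definition matrix_unit :: "'i \<Rightarrow> 'i \<Rightarrow> 'i op" where
  "matrix_unit p q = (\<lambda>i j. if i = p \<and> j = q then 1 else 0)"

lemma tr_mmult_matrix_unit: "tr (D **\<^sub>m matrix_unit p q) = D q p" for D :: "'i::finite op"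
  unfolding tr_def mmult_def matrix_unit_def
  by (simp add: if_zero_distribs flip: if_if_eq_conj cong: if_cong)

lemma tr_matrix_unit: "tr (matrix_unit p q :: 'i::finite op) = (if p = q then 1 else 0)"
  unfolding tr_def matrix_unit_def by (simp add: if_zero_distribs flip: if_if_eq_conj cong: if_cong)

lemma matrix_unit_Pair: "matrix_unit (i, a) (j, b) = matrix_unit i j \<otimes>\<^sub>o matrix_unit a b"
  unfolding matrix_unit_def tensor_def by (auto simp: fun_eq_iff)

lemma matrix_unit_expansion:
  "A = (\<lambda>i j. \<Sum>q\<in>UNIV. \<Sum>p\<in>UNIV. A p q * matrix_unit p q i j)" for A :: "'i::finite op"
  unfolding matrix_unit_def by (simp add: if_zero_distribs flip: if_if_eq_conj cong: if_cong)

lemma matrix_eqI_tr: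
  fixes D1 D2 :: "'i::finite op"
  assumes "\<And>B. tr (D1 **\<^sub>m B) = tr (D2 **\<^sub>m B)"
  shows "D1 = D2"
  using assms[of "matrix_unit _ _"] by (intro ext) (simp add: tr_mmult_matrix_unit)

lemma tr_add_scaleC: "tr (\<lambda>i j. c * A i j + B i j) = c * tr A + tr (B :: 'i::finite op)"
  unfolding tr_def by (simp add: sum.distrib sum_distrib_left)

lemma tr_tensor: "tr (A \<otimes>\<^sub>o B) = tr A * tr B" for A :: "'i::finite op" and B :: "'a::finite op"
  unfolding tr_def tensor_def by (simp add: sum_UNIV_prod sum_product)

lemma tr_mmult_scaleC: "tr (A **\<^sub>m (\<lambda>i j. c * B i j)) = c * tr (A **\<^sub>m B)" for B :: "'i::finite op"
  unfolding tr_def mmult_def by (simp add: sum_distrib_left algebra_simps)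

lemma clinear_mapD:
  "clinear_map \<Phi> \<Longrightarrow> \<Phi> (\<lambda>i j. c * A i j + B i j) = (\<lambda>i j. c * \<Phi> A i j + \<Phi> B i j)"
  unfolding clinear_map_def by blast

lemma clinear_map_zero:
  assumes "clinear_map \<Phi>"
  shows "\<Phi> (\<lambda>i j. 0) = (\<lambda>i j. 0)"
proof -
  have "\<Phi> (\<lambda>i j. 0) i j = \<Phi> (\<lambda>i j. 0) i j + \<Phi> (\<lambda>i j. 0) i j" for i j
    using fun_cong[OF fun_cong[OF clinear_mapD[OF assms, of 1 "\<lambda>i j. 0" "\<lambda>i j. 0"]]] by simp
  then show ?thesis by (intro ext) simp
qed

lemma clinear_map_scaleC:
  "clinear_map \<Phi> \<Longrightarrow> \<Phi> (\<lambda>i j. c * A i j) = (\<lambda>i j. c * \<Phi> A i j)"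
  using clinear_mapD[of \<Phi> c A "\<lambda>i j. 0"] clinear_map_zero[of \<Phi>] by simp

lemma clinear_map_add:
  "clinear_map \<Phi> \<Longrightarrow> \<Phi> (\<lambda>i j. A i j + B i j) = (\<lambda>i j. \<Phi> A i j + \<Phi> B i j)"
  using clinear_mapD[of \<Phi> 1 A B] by simp

lemma clinear_map_sum:
  assumes "clinear_map \<Phi>" and "finite F"
  shows "\<Phi> (\<lambda>i j. \<Sum>m\<in>F. f m i j) = (\<lambda>i j. \<Sum>m\<in>F. \<Phi> (f m) i j)"
  using assms(2)
proof (induction F rule: finite_induct)
  case empty
  then show ?case using clinear_map_zero[OF assms(1)] by simp
next
  case (insert m F)
  then show ?case using clinear_map_add[OF assms(1), of "f m"] by simp
qed

lemma clinear_map_expansion: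
  fixes A :: "'i::finite op"
  assumes "clinear_map \<Phi>"
  shows "\<Phi> A = (\<lambda>i j. \<Sum>q\<in>UNIV. \<Sum>p\<in>UNIV. A p q * \<Phi> (matrix_unit p q) i j)"
  by (subst matrix_unit_expansion[of A]) (simp add: clinear_map_sum[OF assms] clinear_map_scaleC[OF assms])

lemma clinear_map_comp: "clinear_map \<Phi> \<Longrightarrow> clinear_map \<Psi> \<Longrightarrow> clinear_map (\<Phi> \<circ> \<Psi>)"
  unfolding clinear_map_def by simp

lemma sum_swap_nested:
  "(\<Sum>k\<in>K. \<Sum>l\<in>L. \<Sum>q\<in>Q. \<Sum>p\<in>P. f k l q p) = (\<Sum>q\<in>Q. \<Sum>p\<in>P. \<Sum>k\<in>K. \<Sum>l\<in>L. f k l q p)"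
  by (subst sum.swap, subst (2) sum.swap, subst sum.swap) (simp add: sum.swap[of _ L])

lemma tr_mmult_dual_map:
  fixes \<Phi> :: "'i::finite op \<Rightarrow> 'j::finite op"
  assumes "clinear_map \<Phi>"
  shows "tr (A **\<^sub>m \<Phi> B) = tr (dual_map \<Phi> A **\<^sub>m B)"
proof -
  define D where "D = (\<lambda>q p. tr (A **\<^sub>m \<Phi> (matrix_unit p q)))"
  have D: "tr (A **\<^sub>m \<Phi> B) = tr (D **\<^sub>m B)" for B
  proof -
    have "tr (A **\<^sub>m \<Phi> B) =
        (\<Sum>k\<in>UNIV. \<Sum>l\<in>UNIV. \<Sum>q\<in>UNIV. \<Sum>p\<in>UNIV. B p q * (A k l * \<Phi> (matrix_unit p q) l k))"
      unfolding tr_def mmult_def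
      by (subst clinear_map_expansion[OF assms]) (simp add: sum_distrib_left mult.left_commute)
    also have "\<dots> = (\<Sum>q\<in>UNIV. \<Sum>p\<in>UNIV. B p q * (\<Sum>k\<in>UNIV. \<Sum>l\<in>UNIV. A k l * \<Phi> (matrix_unit p q) l k))"
      by (subst sum_swap_nested) (simp add: sum_distrib_left)
    also have "\<dots> = tr (D **\<^sub>m B)"
      unfolding D_def tr_def mmult_def by (simp add: mult.commute)
    finally show ?thesis .
  qed
  have "dual_map \<Phi> A = D"
    unfolding dual_map_def by (rule the_equality) (auto intro: matrix_eqI_tr simp: D)
  then show ?thesis using D by simp
qed

lemma dual_map_apply:
  "clinear_map \<Phi> \<Longrightarrow> dual_map \<Phi> A q p = tr (A **\<^sub>m \<Phi> (matrix_unit p q))"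
  by (simp add: tr_mmult_dual_map tr_mmult_matrix_unit)

section \<open>Positive semidefinite matrices\<close>

lemma qform_add_unit:
  fixes Z :: "'a::finite op"
  shows "qform UNIV Z (\<lambda>i. v i + t * (if i = p then 1 else 0)) =
     qform UNIV Z v + cnj t * (\<Sum>j\<in>UNIV. Z p j * v j) + t * (\<Sum>i\<in>UNIV. cnj (v i) * Z i p)
     + cnj t * t * Z p p"
  unfolding qform_def
  by (simp add: algebra_simps sum.distrib if_zero_distribs sum_distrib_left cong: if_cong)

lemma qform_unit: "qform UNIV Z (\<lambda>i. if i = a then 1 else 0) = Z a (a :: 'a::finite)"
  using qform_add_unit[of Z "\<lambda>_. 0" 1 a] by (simp add: qform_def)

lemma psd_on_diag:
  fixes Z :: "'a::finite op"
  assumes "psd_on UNIV Z"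
  shows "Z a a = complex_of_real (Re (Z a a))" and "Re (Z a a) \<ge> 0"
  using assms[unfolded psd_on_def, rule_format, of "\<lambda>i. if i = a then 1 else 0"]
  by (simp_all add: qform_unit complex_eq_iff)

text \<open>Polarization: the quadratic form is real on \<open>e\<^sub>a + e\<^sub>b\<close> and on \<open>e\<^sub>a + \<i> e\<^sub>b\<close>.\<close>
lemma psd_on_hermitian:
  fixes Z :: "'a::finite op"
  assumes "psd_on UNIV Z"
  shows "Z a b = cnj (Z b a)"
proof -
  have q: "qform UNIV Z (\<lambda>i. (if i = a then 1 else 0) + t * (if i = b then 1 else 0))
     = Z a a + cnj t * Z b a + t * Z a b + cnj t * t * Z b b" for t
    by (subst qform_add_unit) (simp add: qform_unit if_zero_distribs cong: if_cong)
  have "Im (qform UNIV Z v) = 0" for v using assms unfolding psd_on_def by blast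
  from this[of "\<lambda>i. (if i = a then 1 else 0) + 1 * (if i = b then 1 else 0)"]
       this[of "\<lambda>i. (if i = a then 1 else 0) + \<i> * (if i = b then 1 else 0)"]
  show ?thesis
    using psd_on_diag(1)[OF assms, of a] psd_on_diag(1)[OF assms, of b]
    unfolding q by (simp add: complex_eq_iff)
qed

lemma qform_add_unit_hermitian:
  fixes Z :: "'a::finite op" and v :: "'a \<Rightarrow> complex" and p :: 'a
  assumes "psd_on UNIV Z"
  defines "s \<equiv> \<Sum>j\<in>UNIV. Z p j * v j"
  shows "qform UNIV Z (\<lambda>i. v i + t * (if i = p then 1 else 0)) =
     qform UNIV Z v + cnj t * s + t * cnj s + cnj t * t * Z p p"
proof -
  have "(\<Sum>i\<in>UNIV. cnj (v i) * Z i p) = cnj s"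
    unfolding s_def by (simp add: psd_on_hermitian[OF assms(1), of _ p] mult.commute)
  then show ?thesis unfolding qform_add_unit s_def by simp
qed

lemma psd_on_zero_diag_row:
  fixes Z :: "'a::finite op"
  assumes psd: "psd_on UNIV Z" and "Z p p = 0"
  shows "Z p b = 0"
proof (rule ccontr)
  assume "Z p b \<noteq> 0"
  define s where "s = Z p b"
  define x where "x = (\<bar>Re (Z b b)\<bar> + 1) / (2 * (cmod s)\<^sup>2)"
  define u where "u = (\<lambda>i. (if i = b then 1 else 0) + (- of_real x * s) * (if i = p then 1 else 0))"
  have "qform UNIV Z u = Z b b - of_real x * (s * cnj s) - of_real x * (s * cnj s)"
    using \<open>Z p p = 0\<close> unfolding u_def qform_add_unit_hermitian[OF psd]
    by (simp add: qform_unit if_zero_distribs s_def algebra_simps cong: if_cong)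
  also have "\<dots> = Z b b - of_real (2 * x * (cmod s)\<^sup>2)"
    by (simp only: complex_norm_square[symmetric]) (simp add: algebra_simps)
  finally have "Re (qform UNIV Z u) = Re (Z b b) - 2 * x * (cmod s)\<^sup>2"
    by simp
  moreover have "Re (qform UNIV Z u) \<ge> 0"
    using psd unfolding psd_on_def by blast
  moreover have "2 * x * (cmod s)\<^sup>2 = \<bar>Re (Z b b)\<bar> + 1"
    using \<open>Z p b \<noteq> 0\<close> unfolding x_def s_def by simp
  ultimately show False by linarith
qed

text \<open>Schur complement at the pivot \<open>p\<close>: \<open>w = Z e\<^sub>p / \<surd>Z\<^sub>p\<^sub>p\<close>, or \<open>w = 0\<close> when \<open>Z\<^sub>p\<^sub>p = 0\<close>.\<close>
lemma psd_on_rank_one_deflation: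
  fixes Z :: "'a::finite op"
  assumes psd: "psd_on UNIV Z"
  obtains w where "psd_on UNIV (\<lambda>a b. Z a b - w a * cnj (w b))"
    and "\<And>b. Z p b = w p * cnj (w b)" and "\<And>a. Z a p = 0 \<Longrightarrow> w a = 0"
proof (cases "Z p p = 0")
  case True
  show ?thesis by (rule that[of "\<lambda>_. 0"]) (simp_all add: psd psd_on_zero_diag_row[OF psd True])
next
  case False
  define r where "r = Re (Z p p)"
  have "r > 0" and Zpp: "Z p p = of_real r"
    using psd_on_diag[OF psd, of p] False unfolding r_def by (auto simp: order_le_less)
  define w where "w a = Z a p / of_real (sqrt r)" for a
  have ww: "w a * cnj (w b) = Z a p * Z p b / of_real r" for a b
    using psd_on_hermitian[OF psd, of p b] \<open>r > 0\<close>
    by (simp add: w_def of_real_mult[symmetric] flip: of_real_mult)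
  have "qform UNIV (\<lambda>a b. Z a b - w a * cnj (w b)) v
        = qform UNIV Z (\<lambda>i. v i + (- s / of_real r) * (if i = p then 1 else 0))"
    if s: "s = (\<Sum>j\<in>UNIV. Z p j * v j)" for v s
  proof -
    have cnj_s: "(\<Sum>i\<in>UNIV. cnj (v i) * Z i p) = cnj s"
      unfolding s by (simp add: psd_on_hermitian[OF psd, of _ p] mult.commute)
    have "qform UNIV (\<lambda>a b. Z a b - w a * cnj (w b)) v
          = qform UNIV Z v - (\<Sum>i\<in>UNIV. cnj (v i) * Z i p) * s / of_real r"
      unfolding qform_def ww s
      by (simp add: algebra_simps sum_subtractf sum_distrib_left sum_distrib_right sum_divide_distrib)
    also have "\<dots> = qform UNIV Z v - cnj s * s / of_real r"
      unfolding cnj_s ..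
    also have "\<dots> = qform UNIV Z (\<lambda>i. v i + (- s / of_real r) * (if i = p then 1 else 0))"
      using \<open>r > 0\<close> unfolding qform_add_unit_hermitian[OF psd] Zpp s[symmetric]
      by (simp add: field_simps)
    finally show ?thesis .
  qed
  then have "psd_on UNIV (\<lambda>a b. Z a b - w a * cnj (w b))"
    using psd unfolding psd_on_def by simp
  moreover have "Z p b = w p * cnj (w b)" for b
    using \<open>r > 0\<close> unfolding ww Zpp by simp
  moreover have "w a = 0" if "Z a p = 0" for a
    unfolding w_def that by simp
  ultimately show ?thesis by (rule that)
qed

lemma psd_on_gram_supported:
  fixes Z :: "'a::finite op"
  assumes "finite F" and "psd_on UNIV Z" and "\<And>a b. a \<notin> F \<or> b \<notin> F \<Longrightarrow> Z a b = 0"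
  shows "\<exists>W. \<forall>a b. Z a b = (\<Sum>m\<in>F. W m a * cnj (W m b))"
  using assms
proof (induction F arbitrary: Z rule: finite_induct)
  case empty
  then show ?case by simp
next
  case (insert p F)
  obtain w where psd': "psd_on UNIV (\<lambda>a b. Z a b - w a * cnj (w b))"
    and row: "\<And>b. Z p b = w p * cnj (w b)" and zero: "\<And>a. Z a p = 0 \<Longrightarrow> w a = 0"
    using psd_on_rank_one_deflation[OF insert.prems(1)] by blast
  have col: "Z a p = w a * cnj (w p)" for a
    using psd_on_hermitian[OF insert.prems(1), of a p] row[of a] by simp
  have "Z a b - w a * cnj (w b) = 0" if outside: "a \<notin> F \<or> b \<notin> F" for a b
  proof -
    consider "a = p" | "b = p" | "a \<notin> insert p F" | "b \<notin> insert p F"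
      using outside by blast
    then show ?thesis
    proof cases
      case 3
      then show ?thesis using zero[of a] insert.prems(2) by simp
    next
      case 4
      then show ?thesis using zero[of b] insert.prems(2) by simp
    qed (simp_all add: row col)
  qed
  then obtain W where W: "\<And>a b. Z a b - w a * cnj (w b) = (\<Sum>m\<in>F. W m a * cnj (W m b))"
    using insert.IH[OF psd'] by blast
  have "Z a b = (\<Sum>m\<in>insert p F. (W(p := w)) m a * cnj ((W(p := w)) m b))" for a b
  proof -
    have "(\<Sum>m\<in>F. (W(p := w)) m a * cnj ((W(p := w)) m b)) = Z a b - w a * cnj (w b)"
      unfolding W using insert.hyps by (intro sum.cong) auto
    then show ?thesis using insert.hyps by simp
  qed
  then show ?case by blast
qed

lemma positive_op_gram:
  fixes Z :: "'a::finite op"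
  assumes "positive_op Z"
  obtains W :: "'a \<Rightarrow> 'a \<Rightarrow> complex" where "\<And>a b. Z a b = (\<Sum>m\<in>UNIV. W m a * cnj (W m b))"
proof -
  have "\<exists>W :: 'a \<Rightarrow> 'a \<Rightarrow> complex. \<forall>a b. Z a b = (\<Sum>m\<in>UNIV. W m a * cnj (W m b))"
    by (rule psd_on_gram_supported) (use assms in \<open>simp_all add: positive_op_def\<close>)
  then show ?thesis using that by blast
qed

lemma psd_on_congruence:
  fixes N :: "'r op" and M :: "'p op" and T :: "'m \<Rightarrow> 'p \<Rightarrow> 'r \<Rightarrow> complex"
  assumes N: "psd_on J N"
    and M: "\<And>p q. p \<in> I \<Longrightarrow> q \<in> I \<Longrightarrow> M p q = (\<Sum>m\<in>F. \<Sum>r\<in>J. \<Sum>s\<in>J. T m p r * N r s * cnj (T m q s))"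
  shows "psd_on I M"
proof -
  have "qform I M v = (\<Sum>m\<in>F. qform J N (\<lambda>s. \<Sum>q\<in>I. cnj (T m q s) * v q))" for v
  proof -
    have "qform I M v = (\<Sum>p\<in>I. \<Sum>q\<in>I. \<Sum>m\<in>F. \<Sum>r\<in>J. \<Sum>s\<in>J.
        (T m p r * cnj (v p)) * N r s * (cnj (T m q s) * v q))"
      unfolding qform_def using M by (simp add: sum_distrib_left sum_distrib_right algebra_simps)
    also have "\<dots> = (\<Sum>m\<in>F. \<Sum>p\<in>I. \<Sum>q\<in>I. \<Sum>r\<in>J. \<Sum>s\<in>J.
        (T m p r * cnj (v p)) * N r s * (cnj (T m q s) * v q))"
      by (subst sum.swap) (simp add: sum.swap[of _ F])
    also have "\<dots> = (\<Sum>m\<in>F. qform J N (\<lambda>s. \<Sum>q\<in>I. cnj (T m q s) * v q))"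
      unfolding qform_def
      by (subst sum_swap_nested) (simp add: sum_distrib_left sum_distrib_right algebra_simps)
    finally show ?thesis .
  qed
  then show ?thesis
    using N unfolding psd_on_def by (simp add: Im_sum Re_sum sum_nonneg)
qed

definition hermitian :: "'i op \<Rightarrow> bool" where
  "hermitian H \<longleftrightarrow> (\<forall>a b. H a b = cnj (H b a))"

lemma qform_scaleR: "qform I A (\<lambda>i. complex_of_real t * v i) = complex_of_real (t\<^sup>2) * qform I A v"
  unfolding qform_def by (simp add: sum_distrib_left algebra_simps power2_eq_square)

lemma qform_add_scaleC: "qform I (\<lambda>a b. c * A a b + B a b) v = c * qform I A v + qform I B v"
  unfolding qform_def by (simp add: algebra_simps sum.distrib sum_distrib_left)

text \<open>By compactness of the unit sphere, a positive definite form is bounded below by a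
  positive multiple of the squared norm.\<close>
lemma positive_definite_coercive:
  fixes \<xi> :: "'a::finite op"
  assumes "positive_definite \<xi>"
  obtains c where "c > 0" and "\<And>v. Re (qform UNIV \<xi> v) \<ge> c * (\<Sum>i\<in>UNIV. (cmod (v i))\<^sup>2)"
proof -
  define f where "f x = Re (qform UNIV \<xi> (\<lambda>i. x $ i))" for x :: "complex^'a"
  have "continuous_on (sphere 0 1) f"
    unfolding f_def qform_def by (intro continuous_intros)
  then obtain x0 where x0: "x0 \<in> sphere 0 1" and min: "\<And>y. y \<in> sphere 0 1 \<Longrightarrow> f x0 \<le> f y"
    using continuous_attains_inf[OF compact_sphere, of 0 1 f] by auto
  have "x0 \<noteq> 0" using x0 by auto
  then have "(\<lambda>i. x0 $ i) \<noteq> (\<lambda>_. 0)" by (metis vec_eq_iff zero_index)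
  then have "f x0 > 0"
    using assms unfolding f_def positive_definite_def by blast
  moreover have "Re (qform UNIV \<xi> v) \<ge> f x0 * (\<Sum>i\<in>UNIV. (cmod (v i))\<^sup>2)" for v
  proof (cases "v = (\<lambda>_. 0)")
    case True
    then show ?thesis by (simp add: qform_def)
  next
    case False
    define x where "x = (\<chi> i. v i)"
    have norm_x: "(norm x)\<^sup>2 = (\<Sum>i\<in>UNIV. (cmod (v i))\<^sup>2)"
      unfolding x_def norm_vec_def L2_set_def by (simp add: sum_nonneg)
    have "x \<noteq> 0" using False unfolding x_def by (metis vec_eq_iff vec_lambda_beta zero_index ext)
    then have "norm x > 0" by simp
    define y where "y = (1 / norm x) *\<^sub>R x"
    have "y \<in> sphere 0 1" unfolding y_def using \<open>norm x > 0\<close> by simp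
    then have "f x0 \<le> f y" by (rule min)
    also have "f y = (1 / norm x)\<^sup>2 * Re (qform UNIV \<xi> v)"
    proof -
      have "(\<lambda>i. y $ i) = (\<lambda>i. complex_of_real (1 / norm x) * v i)"
        unfolding y_def by (simp only: vector_scaleR_component) (simp add: x_def scaleR_conv_of_real)
      then show ?thesis unfolding f_def by (simp only: qform_scaleR) simp
    qed
    finally have "f x0 * (norm x)\<^sup>2 \<le> Re (qform UNIV \<xi> v)"
      using \<open>norm x > 0\<close> by (simp add: field_simps power2_eq_square)
    then show ?thesis using norm_x by simp
  qed
  ultimately show ?thesis by (rule that)
qed

lemma qform_norm_bound:
  fixes H :: "'a::finite op"
  shows "cmod (qform UNIV H v) \<le> (\<Sum>i\<in>UNIV. \<Sum>j\<in>UNIV. cmod (H i j)) * (\<Sum>k\<in>UNIV. (cmod (v k))\<^sup>2)"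
proof -
  define N where "N = (\<Sum>k\<in>UNIV. (cmod (v k))\<^sup>2)"
  have sq: "(cmod (v i))\<^sup>2 \<le> N" for i
    unfolding N_def by (rule member_le_sum) auto
  have vv: "cmod (v i) * cmod (v j) \<le> N" for i j
  proof -
    have "cmod (v i) * cmod (v j) \<le> ((cmod (v i))\<^sup>2 + (cmod (v j))\<^sup>2) / 2"
      using sum_squares_bound[of "cmod (v i)" "cmod (v j)"] by (simp add: power2_eq_square)
    also have "\<dots> \<le> N" using sq[of i] sq[of j] by simp
    finally show ?thesis .
  qed
  have "cmod (qform UNIV H v) \<le> (\<Sum>i\<in>UNIV. \<Sum>j\<in>UNIV. cmod (cnj (v i) * H i j * v j))"
    unfolding qform_def by (rule order_trans[OF norm_sum], rule sum_mono, rule norm_sum)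
  also have "\<dots> \<le> (\<Sum>i\<in>UNIV. \<Sum>j\<in>UNIV. cmod (H i j) * N)"
  proof (intro sum_mono)
    fix i j
    have "cmod (cnj (v i) * H i j * v j) = cmod (H i j) * (cmod (v i) * cmod (v j))"
      by (simp add: norm_mult)
    also have "\<dots> \<le> cmod (H i j) * N" by (rule mult_left_mono[OF vv]) simp
    finally show "cmod (cnj (v i) * H i j * v j) \<le> cmod (H i j) * N" .
  qed
  also have "\<dots> = (\<Sum>i\<in>UNIV. \<Sum>j\<in>UNIV. cmod (H i j)) * N"
    by (simp add: sum_distrib_right)
  finally show ?thesis unfolding N_def .
qed

lemma hermitian_qform_real:
  fixes H :: "'a::finite op"
  assumes "hermitian H"
  shows "Im (qform UNIV H v) = 0"
proof -
  have "cnj (H i j) = H j i" for i j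
    using assms unfolding hermitian_def by (metis complex_cnj_cnj)
  then have "cnj (qform UNIV H v) = (\<Sum>i\<in>UNIV. \<Sum>j\<in>UNIV. v i * H j i * cnj (v j))"
    unfolding qform_def by (simp add: cnj_sum)
  also have "\<dots> = qform UNIV H v"
    unfolding qform_def by (subst sum.swap) (simp add: mult.commute mult.left_commute)
  finally have "Im (cnj (qform UNIV H v)) = Im (qform UNIV H v)" by simp
  then show ?thesis by simp
qed

lemma positive_definite_perturbation:
  fixes \<xi> H :: "'a::finite op"
  assumes "positive_definite \<xi>" and "hermitian H"
  obtains e where "e > 0" and "\<And>t. \<bar>t\<bar> \<le> e \<Longrightarrow> positive_op (\<lambda>a b. complex_of_real t * H a b + \<xi> a b)"
proof -
  obtain c where "c > 0" and c: "\<And>v. Re (qform UNIV \<xi> v) \<ge> c * (\<Sum>i\<in>UNIV. (cmod (v i))\<^sup>2)"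
    using positive_definite_coercive[OF assms(1)] by blast
  define K where "K = (\<Sum>i\<in>UNIV. \<Sum>j\<in>UNIV. cmod (H i j))"
  have "K \<ge> 0" unfolding K_def by (simp add: sum_nonneg)
  define e where "e = c / (K + 1)"
  have "e > 0" and "e * K \<le> c"
    unfolding e_def using \<open>c > 0\<close> \<open>K \<ge> 0\<close> by (simp_all add: field_simps)
  have real: "Im (qform UNIV \<xi> v) = 0" for v
    using assms(1) unfolding positive_definite_def positive_op_def psd_on_def by blast
  have "positive_op (\<lambda>a b. complex_of_real t * H a b + \<xi> a b)" if "\<bar>t\<bar> \<le> e" for t
    unfolding positive_op_def psd_on_def qform_add_scaleC
  proof (intro allI conjI)
    fix v
    show "Im (complex_of_real t * qform UNIV H v + qform UNIV \<xi> v) = 0"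
      using real[of v] hermitian_qform_real[OF assms(2), of v] by simp
    define N where "N = (\<Sum>k\<in>UNIV. (cmod (v k))\<^sup>2)"
    have "N \<ge> 0" unfolding N_def by (simp add: sum_nonneg)
    have "\<bar>Re (qform UNIV H v)\<bar> \<le> K * N"
      using abs_Re_le_cmod[of "qform UNIV H v"] qform_norm_bound[of H v]
      unfolding K_def N_def by linarith
    then have "\<bar>t * Re (qform UNIV H v)\<bar> \<le> e * (K * N)"
      using that \<open>K \<ge> 0\<close> \<open>N \<ge> 0\<close> by (simp add: abs_mult mult_mono)
    also have "\<dots> \<le> c * N"
      using \<open>e * K \<le> c\<close> \<open>N \<ge> 0\<close> by (simp add: mult.assoc[symmetric] mult_right_mono)
    also have "\<dots> \<le> Re (qform UNIV \<xi> v)"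
      using c unfolding N_def by blast
    finally show "0 \<le> Re (complex_of_real t * qform UNIV H v + qform UNIV \<xi> v)"
      using hermitian_qform_real[OF assms(2), of v] by simp
  qed
  with \<open>e > 0\<close> show ?thesis by (rule that)
qed

section \<open>Completely positive maps\<close>

lemma completely_positive_comp:
  assumes "completely_positive \<Phi>" and "completely_positive \<Psi>"
  shows "completely_positive (\<Phi> \<circ> \<Psi>)"
proof -
  have "ampl (\<Phi> \<circ> \<Psi>) X = ampl \<Phi> (ampl \<Psi> X)" for X
    unfolding ampl_def by (simp add: case_prod_beta')
  then show ?thesis
    using assms clinear_map_comp unfolding completely_positive_def by auto
qed

lemma clinear_map_tensor_right: "clinear_map (\<lambda>\<rho>. \<rho> \<otimes>\<^sub>o \<sigma>)"
  unfolding clinear_map_def tensor_def by (auto simp: fun_eq_iff algebra_simps)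

lemma clinear_map_tensor_left: "clinear_map (\<lambda>\<sigma>. \<rho> \<otimes>\<^sub>o \<sigma>)"
  unfolding clinear_map_def tensor_def by (auto simp: fun_eq_iff algebra_simps)

lemma ptrace_A_idop_tensor_mmult:
  fixes Z :: "'a::finite op" and M :: "('s::finite \<times> 'a) op"
  shows "ptrace_A ((idop \<otimes>\<^sub>o Z) **\<^sub>m M) i i' = (\<Sum>a\<in>UNIV. \<Sum>b\<in>UNIV. Z a b * M (i, b) (i', a))"
  unfolding ptrace_A_def mmult_def tensor_def idop_def
  by (simp add: sum_UNIV_prod if_zero_distribs cong: if_cong)

lemma clinear_map_ptrace_A_idop_tensor: "clinear_map (\<lambda>M. ptrace_A ((idop \<otimes>\<^sub>o Z) **\<^sub>m M))"
  unfolding clinear_map_def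
  by (simp add: fun_eq_iff ptrace_A_idop_tensor_mmult algebra_simps sum.distrib sum_distrib_left)

lemma completely_positive_tensor_right:
  fixes \<sigma> :: "'a::finite op"
  assumes "positive_op \<sigma>"
  shows "completely_positive (\<lambda>\<rho> :: 's::finite op. \<rho> \<otimes>\<^sub>o \<sigma>)"
  unfolding completely_positive_def
proof (intro conjI allI impI clinear_map_tensor_right)
  fix n and X :: "(nat \<times> 's) op"
  assume X: "psd_on ({..<n} \<times> UNIV) X"
  obtain W :: "'a \<Rightarrow> 'a \<Rightarrow> complex" where W: "\<And>a b. \<sigma> a b = (\<Sum>m\<in>UNIV. W m a * cnj (W m b))"
    using positive_op_gram[OF assms] by blast
  define T where "T m p r = (if r = (fst p, fst (snd p)) then W m (snd (snd p)) else 0)"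
    for m and p :: "nat \<times> 's \<times> 'a" and r
  show "psd_on ({..<n} \<times> UNIV) (ampl (\<lambda>\<rho>. \<rho> \<otimes>\<^sub>o \<sigma>) X)"
  proof (rule psd_on_congruence[OF X, where F = UNIV and T = T])
    fix p q :: "nat \<times> 's \<times> 'a"
    assume "p \<in> {..<n} \<times> UNIV" and "q \<in> {..<n} \<times> UNIV"
    then show "ampl (\<lambda>\<rho>. \<rho> \<otimes>\<^sub>o \<sigma>) X p q =
        (\<Sum>m\<in>UNIV. \<Sum>r\<in>{..<n} \<times> UNIV. \<Sum>s\<in>{..<n} \<times> UNIV. T m p r * X r s * cnj (T m q s))"
      unfolding T_def ampl_def tensor_def W
      by (auto simp: sum_distrib_left algebra_simps if_zero_distribs mem_Times_iff split: prod.split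
          cong: if_cong)
  qed
qed

lemma completely_positive_ptrace_A_idop_tensor:
  fixes Z :: "'a::finite op"
  assumes "positive_op Z"
  shows "completely_positive (\<lambda>M :: ('s::finite \<times> 'a) op. ptrace_A ((idop \<otimes>\<^sub>o Z) **\<^sub>m M))"
  unfolding completely_positive_def
proof (intro conjI allI impI clinear_map_ptrace_A_idop_tensor)
  fix n and X :: "(nat \<times> 's \<times> 'a) op"
  assume X: "psd_on ({..<n} \<times> UNIV) X"
  obtain W :: "'a \<Rightarrow> 'a \<Rightarrow> complex" where W: "\<And>a b. Z a b = (\<Sum>m\<in>UNIV. W m a * cnj (W m b))"
    using positive_op_gram[OF assms] by blast
  define T where "T m p r = (if fst r = fst p \<and> fst (snd r) = snd p then cnj (W m (snd (snd r))) else 0)"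
    for m and p :: "nat \<times> 's" and r :: "nat \<times> 's \<times> 'a"
  show "psd_on ({..<n} \<times> UNIV) (ampl (\<lambda>M. ptrace_A ((idop \<otimes>\<^sub>o Z) **\<^sub>m M)) X)"
  proof (rule psd_on_congruence[OF X, where F = UNIV and T = T])
    fix p q :: "nat \<times> 's"
    assume "p \<in> {..<n} \<times> UNIV" and "q \<in> {..<n} \<times> UNIV"
    then obtain k j l j' where p: "p = (k, j)" "k < n" and q: "q = (l, j')" "l < n"
      by auto
    have "(\<Sum>m\<in>UNIV. \<Sum>r\<in>{..<n} \<times> UNIV. \<Sum>s\<in>{..<n} \<times> UNIV. T m p r * X r s * cnj (T m q s))
        = (\<Sum>m\<in>UNIV. \<Sum>b\<in>UNIV. \<Sum>a\<in>UNIV. W m a * cnj (W m b) * X (k, j, b) (l, j', a))"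
      unfolding T_def p(1) q(1) using p(2) q(2)
      by (simp add: sum.cartesian_product' sum_UNIV_prod sum_distrib_left sum_distrib_right
          algebra_simps if_zero_distribs flip: if_if_eq_conj cong: if_cong)
    also have "\<dots> = (\<Sum>m\<in>UNIV. \<Sum>a\<in>UNIV. \<Sum>b\<in>UNIV. W m a * cnj (W m b) * X (k, j, b) (l, j', a))"
      by (rule sum.cong[OF refl sum.swap])
    also have "\<dots> = (\<Sum>a\<in>UNIV. \<Sum>m\<in>UNIV. \<Sum>b\<in>UNIV. W m a * cnj (W m b) * X (k, j, b) (l, j', a))"
      by (rule sum.swap)
    also have "\<dots> = (\<Sum>a\<in>UNIV. \<Sum>b\<in>UNIV. Z a b * X (k, j, b) (l, j', a))"
      unfolding W sum_distrib_right by (rule sum.cong[OF refl sum.swap])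
    finally show "ampl (\<lambda>M. ptrace_A ((idop \<otimes>\<^sub>o Z) **\<^sub>m M)) X p q =
        (\<Sum>m\<in>UNIV. \<Sum>r\<in>{..<n} \<times> UNIV. \<Sum>s\<in>{..<n} \<times> UNIV. T m p r * X r s * cnj (T m q s))"
      unfolding ampl_def ptrace_A_idop_tensor_mmult p(1) q(1) by simp
  qed
qed

section \<open>Instruments induced by a measurement scheme\<close>

definition induced_instrument ::
  "(('s::finite \<times> 'a::finite) op \<Rightarrow> ('s \<times> 'a) op) \<Rightarrow> ('x \<Rightarrow> 'a op) \<Rightarrow> 'a op \<Rightarrow> 'x \<Rightarrow> 's op \<Rightarrow> 's op"
  where "induced_instrument E Z \<sigma> x \<rho> = ptrace_A ((idop \<otimes>\<^sub>o Z x) **\<^sub>m E (\<rho> \<otimes>\<^sub>o \<sigma>))"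

lemma induced_instrument_comp:
  "induced_instrument E Z \<sigma> x = (\<lambda>M. ptrace_A ((idop \<otimes>\<^sub>o Z x) **\<^sub>m M)) \<circ> E \<circ> (\<lambda>\<rho>. \<rho> \<otimes>\<^sub>o \<sigma>)"
  unfolding induced_instrument_def by auto

lemma clinear_map_induced_instrument_probe:
  "clinear_map E \<Longrightarrow> clinear_map (\<lambda>\<sigma>. induced_instrument E Z \<sigma> x \<rho>)"
  using clinear_map_comp[OF clinear_map_ptrace_A_idop_tensor clinear_map_comp[OF _ clinear_map_tensor_left]]
  unfolding induced_instrument_def comp_def by blast

lemma tr_ptrace_A: "tr (ptrace_A M) = tr M"
  unfolding tr_def ptrace_A_def by (simp add: sum_UNIV_prod)

lemma tr_mmult_ptrace_A_idop_tensor: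
  fixes B :: "'s::finite op" and Z :: "'a::finite op" and N :: "('s \<times> 'a) op"
  shows "tr (B **\<^sub>m ptrace_A ((idop \<otimes>\<^sub>o Z) **\<^sub>m N)) = tr ((B \<otimes>\<^sub>o Z) **\<^sub>m N)"
proof -
  have "tr (B **\<^sub>m ptrace_A ((idop \<otimes>\<^sub>o Z) **\<^sub>m N)) =
      (\<Sum>i\<in>UNIV. \<Sum>k\<in>UNIV. \<Sum>a\<in>UNIV. \<Sum>b\<in>UNIV. B i k * (Z a b * N (k, b) (i, a)))"
    unfolding tr_def mmult_def[of B] ptrace_A_idop_tensor_mmult by (simp add: sum_distrib_left)
  also have "\<dots> = (\<Sum>i\<in>UNIV. \<Sum>a\<in>UNIV. \<Sum>k\<in>UNIV. \<Sum>b\<in>UNIV. B i k * (Z a b * N (k, b) (i, a)))"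
    by (rule sum.cong[OF refl sum.swap])
  also have "\<dots> = tr ((B \<otimes>\<^sub>o Z) **\<^sub>m N)"
    unfolding tr_def mmult_def tensor_def by (simp add: sum_UNIV_prod mult.assoc)
  finally show ?thesis .
qed

lemma dual_map_tensor_apply:
  fixes E :: "('s::finite \<times> 'a::finite) op \<Rightarrow> ('s \<times> 'a) op"
  assumes "clinear_map E"
  shows "dual_map E (B \<otimes>\<^sub>o Z) (j, b) (i, a)
    = tr (B **\<^sub>m ptrace_A ((idop \<otimes>\<^sub>o Z) **\<^sub>m E (matrix_unit i j \<otimes>\<^sub>o matrix_unit a b)))"
  unfolding dual_map_apply[OF assms] tr_mmult_ptrace_A_idop_tensor matrix_unit_Pair ..

lemma instrument_induced_instrument:
  assumes "channel E" and "\<And>x. positive_op (Z x)" and "(\<lambda>i j. \<Sum>x\<in>UNIV. Z x i j) = idop"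
    and "is_state \<sigma>"
  shows "instrument (induced_instrument E Z \<sigma>)"
  unfolding instrument_def
proof (intro conjI allI)
  show "completely_positive (induced_instrument E Z \<sigma> x)" for x
    unfolding induced_instrument_comp using assms
    by (intro completely_positive_comp completely_positive_ptrace_A_idop_tensor completely_positive_tensor_right)
       (auto simp: channel_def is_state_def)
  have "(\<lambda>i j. \<Sum>x\<in>UNIV. induced_instrument E Z \<sigma> x \<rho> i j) = ptrace_A (E (\<rho> \<otimes>\<^sub>o \<sigma>))" for \<rho>
  proof (intro ext)
    fix i j
    define M where "M = E (\<rho> \<otimes>\<^sub>o \<sigma>)"
    have "(\<Sum>x\<in>UNIV. induced_instrument E Z \<sigma> x \<rho> i j)
        = (\<Sum>x\<in>UNIV. \<Sum>a\<in>UNIV. \<Sum>b\<in>UNIV. Z x a b * M (i, b) (j, a))"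
      unfolding induced_instrument_def ptrace_A_idop_tensor_mmult M_def ..
    also have "\<dots> = (\<Sum>a\<in>UNIV. \<Sum>b\<in>UNIV. (\<Sum>x\<in>UNIV. Z x a b) * M (i, b) (j, a))"
      unfolding sum_distrib_right by (subst sum.swap) (rule sum.cong[OF refl sum.swap])
    also have "\<dots> = ptrace_A M i j"
      using assms(3) unfolding ptrace_A_def idop_def
      by (simp add: fun_eq_iff if_zero_distribs cong: if_cong)
    finally show "(\<Sum>x\<in>UNIV. induced_instrument E Z \<sigma> x \<rho> i j) = ptrace_A (E (\<rho> \<otimes>\<^sub>o \<sigma>)) i j"
      unfolding M_def .
  qed
  then show "trace_preserving (\<lambda>\<rho> i j. \<Sum>x\<in>UNIV. induced_instrument E Z \<sigma> x \<rho> i j)"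
    using assms(1,4) unfolding trace_preserving_def channel_def is_state_def
    by (simp add: tr_ptrace_A tr_tensor)
qed

text \<open>A traceless matrix is \<open>H\<^sub>1 + \<i> H\<^sub>2\<close> with \<open>H\<^sub>1, H\<^sub>2\<close> traceless and Hermitian.\<close>
lemma clinear_map_eq_trace_scaled:
  fixes L :: "'a::finite op \<Rightarrow> 'b op"
  assumes L: "clinear_map L"
    and zero: "\<And>H. hermitian H \<Longrightarrow> tr H = 0 \<Longrightarrow> L H = (\<lambda>i j. 0)"
    and "tr \<xi> = 1"
  shows "L \<sigma> = (\<lambda>i j. tr \<sigma> * L \<xi> i j)"
proof -
  define \<tau> where "\<tau> = (\<lambda>a b. \<sigma> a b - tr \<sigma> * \<xi> a b)"
  have "tr \<tau> = 0"
    using \<open>tr \<xi> = 1\<close> unfolding \<tau>_def tr_def by (simp add: sum_subtractf flip: sum_distrib_left)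
  define H\<^sub>1 where "H\<^sub>1 = (\<lambda>a b. (\<tau> a b + cnj (\<tau> b a)) / 2)"
  define H\<^sub>2 where "H\<^sub>2 = (\<lambda>a b. (\<tau> a b - cnj (\<tau> b a)) / (2 * \<i>))"
  have "hermitian H\<^sub>1" and "hermitian H\<^sub>2"
    unfolding hermitian_def H\<^sub>1_def H\<^sub>2_def by (simp_all add: add.commute field_simps)
  moreover have "tr H\<^sub>1 = (tr \<tau> + cnj (tr \<tau>)) / 2"
    unfolding H\<^sub>1_def tr_def by (simp add: sum.distrib cnj_sum flip: sum_divide_distrib)
  moreover have "tr H\<^sub>2 = (tr \<tau> - cnj (tr \<tau>)) / (2 * \<i>)"
    unfolding H\<^sub>2_def tr_def by (simp only: sum_divide_distrib[symmetric] sum_subtractf cnj_sum)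
  moreover have "\<tau> = (\<lambda>a b. \<i> * H\<^sub>2 a b + H\<^sub>1 a b)"
    unfolding H\<^sub>1_def H\<^sub>2_def by (simp add: fun_eq_iff field_simps)
  ultimately have "L \<tau> = (\<lambda>i j. 0)"
    using zero clinear_mapD[OF L, of \<i> H\<^sub>2 H\<^sub>1] \<open>tr \<tau> = 0\<close> by simp
  moreover have "\<sigma> = (\<lambda>a b. tr \<sigma> * \<xi> a b + \<tau> a b)"
    unfolding \<tau>_def by simp
  ultimately show ?thesis
    using clinear_mapD[OF L, of "tr \<sigma>" \<xi> \<tau>] by simp
qed

lemma extremal_induced_instrument_traceless_hermitian:
  assumes ms: "measurement_scheme \<xi> E Z" and pd: "positive_definite \<xi>"
    and extremal: "extremal_instrument (induced_instrument E Z \<xi>)"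
    and H: "hermitian H" "tr H = 0"
  shows "induced_instrument E Z H x \<rho> = (\<lambda>i j. 0)"
proof -
  have E: "channel E" and "tr \<xi> = 1"
    using ms unfolding measurement_scheme_def is_state_def by auto
  then have linear: "clinear_map (\<lambda>\<sigma>. induced_instrument E Z \<sigma> x \<rho>)" for x \<rho>
    by (intro clinear_map_induced_instrument_probe) (simp add: channel_def completely_positive_def)
  obtain e where "e > 0"
    and pos: "\<And>t. \<bar>t\<bar> \<le> e \<Longrightarrow> positive_op (\<lambda>a b. complex_of_real t * H a b + \<xi> a b)"
    using positive_definite_perturbation[OF pd H(1)] by blast
  define \<sigma> where "\<sigma> t = (\<lambda>a b. complex_of_real t * H a b + \<xi> a b)" for t
  have "instrument (induced_instrument E Z (\<sigma> t))" if "\<bar>t\<bar> \<le> e" for t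
    using ms pos[OF that] \<open>tr \<xi> = 1\<close> H(2)
    unfolding measurement_scheme_def is_state_def \<sigma>_def
    by (intro instrument_induced_instrument) (auto simp: is_state_def tr_add_scaleC)
  then have "instrument (induced_instrument E Z (\<sigma> e))" "instrument (induced_instrument E Z (\<sigma> (- e)))"
    using \<open>e > 0\<close> by simp_all
  moreover have split: "induced_instrument E Z (\<sigma> t) x \<rho>
      = (\<lambda>i j. complex_of_real t * induced_instrument E Z H x \<rho> i j + induced_instrument E Z \<xi> x \<rho> i j)"
    for t x \<rho>
    unfolding \<sigma>_def by (rule clinear_mapD[OF linear])
  then have "\<forall>x \<rho>. induced_instrument E Z \<xi> x \<rho> = (\<lambda>i j.
      complex_of_real (1 / 2) * induced_instrument E Z (\<sigma> e) x \<rho> i j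
      + complex_of_real (1 - 1 / 2) * induced_instrument E Z (\<sigma> (- e)) x \<rho> i j)"
    by (simp add: fun_eq_iff algebra_simps)
  moreover have "(0::real) < 1 / 2" and "(1 / 2 :: real) < 1"
    by simp_all
  ultimately have "induced_instrument E Z (\<sigma> e) = induced_instrument E Z \<xi>"
    using extremal unfolding extremal_instrument_def by blast
  then have "induced_instrument E Z (\<sigma> e) x \<rho> = induced_instrument E Z \<xi> x \<rho>"
    by simp
  then show ?thesis
    using \<open>e > 0\<close> unfolding split by (simp add: fun_eq_iff)
qed

lemma extremal_induced_instrument_probe_independent:
  assumes ms: "measurement_scheme \<xi> E Z" and pd: "positive_definite \<xi>"
    and extremal: "extremal_instrument (induced_instrument E Z \<xi>)"
  shows "induced_instrument E Z \<sigma> x \<rho> = (\<lambda>i j. tr \<sigma> * induced_instrument E Z \<xi> x \<rho> i j)"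
proof (rule clinear_map_eq_trace_scaled[where L = "\<lambda>\<sigma>. induced_instrument E Z \<sigma> x \<rho>"])
  show "clinear_map (\<lambda>\<sigma>. induced_instrument E Z \<sigma> x \<rho>)"
    using ms unfolding measurement_scheme_def channel_def completely_positive_def
    by (intro clinear_map_induced_instrument_probe) simp
  show "tr \<xi> = 1"
    using ms unfolding measurement_scheme_def is_state_def by simp
qed (rule extremal_induced_instrument_traceless_hermitian[OF ms pd extremal])

theorem mainTheorem17:
  fixes \<xi> :: "'a::finite op"
    and E :: "('s::finite \<times> 'a) op \<Rightarrow> ('s \<times> 'a) op"
    and Z :: "'x::finite \<Rightarrow> 'a op"
    and \<I> :: "'x \<Rightarrow> 's op \<Rightarrow> 's op"
  assumes "card (UNIV :: 's set) \<ge> 2"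
    and "measurement_scheme \<xi> E Z"
    and "third_law_scheme \<xi> E Z"
    and "implements \<xi> E Z \<I>"
    and "extremal_instrument \<I>"
  shows "\<forall>x B. dual_map E (B \<otimes>\<^sub>o Z x) = dual_map (\<I> x) B \<otimes>\<^sub>o idop"
proof (intro allI)
  fix x and B :: "'s op"
  have \<I>: "\<I> = induced_instrument E Z \<xi>"
    using assms(4) unfolding implements_def induced_instrument_def by (intro ext) simp
  have pd: "positive_definite \<xi>"
    using assms(3) unfolding third_law_scheme_def full_rank_state_def by simp
  have E: "clinear_map E" and \<I>x: "clinear_map (\<I> x)"
    using assms(2,5) unfolding measurement_scheme_def extremal_instrument_def instrument_def
      channel_def completely_positive_def by auto
  have "dual_map E (B \<otimes>\<^sub>o Z x) (j, b) (i, a) = (dual_map (\<I> x) B \<otimes>\<^sub>o idop) (j, b) (i, a)"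
    for i j a b
  proof -
    have "dual_map E (B \<otimes>\<^sub>o Z x) (j, b) (i, a)
        = tr (B **\<^sub>m induced_instrument E Z (matrix_unit a b) x (matrix_unit i j))"
      unfolding dual_map_tensor_apply[OF E] induced_instrument_def ..
    also have "\<dots> = tr (matrix_unit a b) * tr (B **\<^sub>m \<I> x (matrix_unit i j))"
      unfolding extremal_induced_instrument_probe_independent[OF assms(2) pd assms(5)[unfolded \<I>],
        of "matrix_unit a b"] tr_mmult_scaleC \<I> ..
    also have "\<dots> = tr (matrix_unit a b) * dual_map (\<I> x) B j i"
      unfolding dual_map_apply[OF \<I>x] ..
    also have "\<dots> = (dual_map (\<I> x) B \<otimes>\<^sub>o idop) (j, b) (i, a)"
      by (simp add: tr_matrix_unit tensor_def idop_def)
    finally show ?thesis .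
  qed
  then show "dual_map E (B \<otimes>\<^sub>o Z x) = dual_map (\<I> x) B \<otimes>\<^sub>o idop"
    by (simp add: fun_eq_iff split_paired_all)
qed

end
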